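(* Let $\lambda = (\lambda_1,\dots,\lambda_r)$ be a partition of $n$ with all $\lambda_i > 0$. For $T \subseteq \{1,\dots,r\}$ let $\lambda^{\downarrow T} = (\lambda_1 - \chi_T(1), \dots, \lambda_r - \chi_T(r))$, where $\chi_T$ is the indicator function of $T$. Then $$f_{\lambda,n-\lambda_1}(q) = \sum_{S \subseteq \{ 2,\dots, r \}} q^{|S| n - \binom{|S| + 1}{2}}\, f_{\lambda^{\downarrow (S \cup \{1 \})},\,n-\lambda_1-|S|}(q),$$ with the convention that $f_{\gamma,i}=0$ whenever $\gamma$ is not a partition (i.e. not weakly decreasing).
   Context: For a partition $\lambda\vdash N$ (trailing zero parts allowed), a standard Young tableau of shape $\lambda$ is a filling of the Ferrers diagram with $1,\dots,N$, increasing along rows and down columns; it has a descent at $m$ if $m+1$ lies in a strictly lower row than $m$; $\mathrm{des}$ is the number of descents and $\mathrm{maj}$ their sum. $f_{\lambda,i}(q)=\sum q^{\mathrm{maj}(\tau)}$ over standard Young tableaux of shape $\lambda$ with $\mathrm{des}(\tau)=i$. *)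

theory Defs
  imports "HOL-Computational_Algebra.Polynomial"
begin

text \<open>Partitions are lists (lambda_1, ..., lambda_r) of naturals, 0-indexed:
  the list entry number i is lambda_(i+1). Trailing zero parts are allowed.\<close>

definition is_partition :: "nat list \<Rightarrow> bool" where
  "is_partition lam \<longleftrightarrow> sorted_wrt (\<ge>) lam"

definition cells :: "nat list \<Rightarrow> (nat \<times> nat) set" where
  "cells lam = {(i, j). i < length lam \<and> j < lam ! i}"

definition syt :: "nat list \<Rightarrow> (nat \<times> nat \<Rightarrow> nat) set" where
  "syt lam = {T. bij_betw T (cells lam) {1..sum_list lam}
                 \<and> (\<forall>p. p \<notin> cells lam \<longrightarrow> T p = 0)
                 \<and> (\<forall>i j. (i, Suc j) \<in> cells lam \<longrightarrow> T (i, j) < T (i, Suc j))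
                 \<and> (\<forall>i j. (Suc i, j) \<in> cells lam \<longrightarrow> T (i, j) < T (Suc i, j))}"

definition row_of :: "nat list \<Rightarrow> (nat \<times> nat \<Rightarrow> nat) \<Rightarrow> nat \<Rightarrow> nat" where
  "row_of lam T m = fst (the_inv_into (cells lam) T m)"

definition descents :: "nat list \<Rightarrow> (nat \<times> nat \<Rightarrow> nat) \<Rightarrow> nat set" where
  "descents lam T = {m. 1 \<le> m \<and> m < sum_list lam \<and> row_of lam T (Suc m) > row_of lam T m}"

definition des :: "nat list \<Rightarrow> (nat \<times> nat \<Rightarrow> nat) \<Rightarrow> nat" where
  "des lam T = card (descents lam T)"

definition maj :: "nat list \<Rightarrow> (nat \<times> nat \<Rightarrow> nat) \<Rightarrow> nat" where
  "maj lam T = \<Sum>(descents lam T)"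

definition fpoly :: "nat list \<Rightarrow> nat \<Rightarrow> int poly" where
  "fpoly lam i = (if is_partition lam
      then (\<Sum>T\<in>{T \<in> syt lam. des lam T = i}. monom 1 (maj lam T)) else 0)"

text \<open>lam lowered by the indicator of T (T a set of 0-based row indices).\<close>
definition lower :: "nat list \<Rightarrow> nat set \<Rightarrow> nat list" where
  "lower lam T = map (\<lambda>i. lam ! i - (if i \<in> T then 1 else 0)) [0..<length lam]"

end

theory Submission
  imports Defs "HOL-Library.FuncSet"
begin

text \<open>
  If a standard Young tableau T of shape \<lambda> has the maximal number n - \<lambda>(1) of descents, its
  only non-descents are the predecessors of the \<lambda>(1) - 1 non-initial entries of the first row.
  Hence every m \<ge> a is a descent, where a is the last entry of the first row, so the entries
  a, a + 1, ..., n lie in strictly increasing rows 1 = i(0) < i(1) < ... < i(k), each at the end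
  of its row. Removing these corner cells leaves a tableau U of shape \<lambda> lowered along
  S \<union> {1}, S = {i(1), ..., i(k)}, with the descents of T below a; the removed descents
  n - k, ..., n - 1 sum to kn - (k + 1 choose 2). Conversely every tableau of that shape with
  the maximal number of descents extends uniquely in this way, so T \<mapsto> (S, U) is a bijection.
\<close>

lemma length_le_sum_list: "\<forall>x\<in>set xs. (0::nat) < x \<Longrightarrow> length xs \<le> sum_list xs"
  by (induction xs) auto

lemma strict_mono_on_if_Suc_less:
  fixes f :: "nat \<Rightarrow> 'a::order"
  assumes step: "\<And>m. a \<le> m \<Longrightarrow> m < b \<Longrightarrow> f m < f (Suc m)"
  shows "strict_mono_on {a..b} f"
proof (rule strict_mono_onI)
  fix x y assume x: "x \<in> {a..b}" and y: "y \<in> {a..b}" and "x < y"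
  then have "Suc x \<le> y" by simp
  then show "f x < f y"
  proof (induction y rule: dec_induct)
    case base
    show ?case using x \<open>x < y\<close> y by (intro step) auto
  next
    case (step k)
    then show ?case using assms[of k] x y by fastforce
  qed
qed

lemma mem_cells_iff [simp]: "(i, j) \<in> cells lam \<longleftrightarrow> i < length lam \<and> j < lam ! i"
  by (simp add: cells_def)

lemma cells_eq_Sigma: "cells lam = Sigma {..<length lam} (\<lambda>i. {..<lam ! i})"
  by (auto simp: cells_def)

lemma finite_cells [simp]: "finite (cells lam)"
  by (simp add: cells_eq_Sigma)

lemma card_cells: "card (cells lam) = sum_list lam"
  by (simp add: cells_eq_Sigma sum_list_sum_nth atLeast0LessThan)

lemma is_partition_if_cells_column_closed:
  assumes "\<And>i j. (Suc i, j) \<in> cells mu \<Longrightarrow> (i, j) \<in> cells mu"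
  shows "is_partition mu"
  unfolding is_partition_def
proof (subst sorted_wrt_iff_nth_Suc_transp, (simp add: transp_def), intro allI impI)
  fix i assume i: "Suc i < length mu"
  show "mu ! Suc i \<le> mu ! i"
  proof (cases "mu ! Suc i = 0")
    case False
    with i have "(Suc i, mu ! Suc i - 1) \<in> cells mu" by simp
    then have "(i, mu ! Suc i - 1) \<in> cells mu" by (rule assms)
    with False show ?thesis by auto
  qed simp
qed

lemma syt_bij_betw: "T \<in> syt lam \<Longrightarrow> bij_betw T (cells lam) {1..sum_list lam}"
  and syt_outside: "T \<in> syt lam \<Longrightarrow> p \<notin> cells lam \<Longrightarrow> T p = 0"
  and syt_row_less: "T \<in> syt lam \<Longrightarrow> (i, Suc j) \<in> cells lam \<Longrightarrow> T (i, j) < T (i, Suc j)"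
  and syt_column_less: "T \<in> syt lam \<Longrightarrow> (Suc i, j) \<in> cells lam \<Longrightarrow> T (i, j) < T (Suc i, j)"
  unfolding syt_def by blast+

lemma syt_entry_range: "T \<in> syt lam \<Longrightarrow> p \<in> cells lam \<Longrightarrow> T p \<in> {1..sum_list lam}"
  using syt_bij_betw bij_betwE by blast

lemma syt_entry_inj: "T \<in> syt lam \<Longrightarrow> p \<in> cells lam \<Longrightarrow> q \<in> cells lam \<Longrightarrow> T p = T q \<Longrightarrow> p = q"
  using syt_bij_betw by (metis bij_betw_def inj_on_def)

lemma syt_entry_surj: "T \<in> syt lam \<Longrightarrow> m \<in> {1..sum_list lam} \<Longrightarrow> \<exists>p\<in>cells lam. T p = m"
  using syt_bij_betw by (metis bij_betw_def imageE)

lemma row_of_entry: "T \<in> syt lam \<Longrightarrow> p \<in> cells lam \<Longrightarrow> row_of lam T (T p) = fst p"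
  unfolding row_of_def using syt_bij_betw by (metis bij_betw_def the_inv_into_f_f)

lemma syt_row_mono:
  assumes T: "T \<in> syt lam" and "(i, j') \<in> cells lam" "j \<le> j'"
  shows "T (i, j) \<le> T (i, j')"
  using assms(3,2)
proof (induction j' rule: dec_induct)
  case (step k)
  then show ?case using syt_row_less[OF T, of i k] by simp
qed simp

lemma finite_syt: "finite (syt lam)"
proof -
  let ?extend = "\<lambda>g p. if p \<in> cells lam then g p else 0"
  have "syt lam \<subseteq> ?extend ` (cells lam \<rightarrow>\<^sub>E {1..sum_list lam})"
  proof
    fix T assume T: "T \<in> syt lam"
    then have "T = ?extend (restrict T (cells lam))"
      using syt_outside by fastforce
    moreover have "restrict T (cells lam) \<in> cells lam \<rightarrow>\<^sub>E {1..sum_list lam}"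
      using syt_entry_range[OF T] by auto
    ultimately show "T \<in> ?extend ` (cells lam \<rightarrow>\<^sub>E {1..sum_list lam})"
      by blast
  qed
  then show ?thesis
    by (rule finite_subset) (intro finite_imageI finite_PiE; simp)
qed

lemma descents_subset: "descents lam T \<subseteq> {1..<sum_list lam}"
  by (auto simp: descents_def)

lemma finite_descents [simp]: "finite (descents lam T)"
  using descents_subset finite_subset by blast

lemma row_of_restrict_syt:
  assumes T: "T \<in> syt lam" and U: "U \<in> syt mu" and sub: "cells mu \<subseteq> cells lam"
    and eq: "\<forall>p\<in>cells mu. T p = U p" and m: "m \<in> {1..sum_list mu}"
  shows "row_of lam T m = row_of mu U m"
proof -
  obtain p where p: "p \<in> cells mu" "U p = m"
    using syt_entry_surj[OF U m] by blast
  then show ?thesis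
    using row_of_entry[OF U p(1)] row_of_entry[OF T, of p] sub eq by auto
qed

lemma syt_restrict_below:
  assumes T: "T \<in> syt lam" and cells_mu: "cells mu = {p \<in> cells lam. T p < a}"
    and a: "a \<le> Suc (sum_list lam)"
  shows "(\<lambda>p. if T p < a then T p else 0) \<in> syt mu" (is "?U \<in> _")
    and "sum_list mu = a - 1"
proof -
  have "T ` {p \<in> cells lam. T p < a} = {1..a - 1}"
  proof
    show "T ` {p \<in> cells lam. T p < a} \<subseteq> {1..a - 1}"
      using syt_entry_range[OF T] by force
    show "{1..a - 1} \<subseteq> T ` {p \<in> cells lam. T p < a}"
    proof
      fix m assume m: "m \<in> {1..a - 1}"
      then have "m \<in> {1..sum_list lam}" using a by auto
      then obtain p where "p \<in> cells lam" "T p = m"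
        using syt_entry_surj[OF T] by blast
      with m show "m \<in> T ` {p \<in> cells lam. T p < a}" by force
    qed
  qed
  then have bij_T: "bij_betw T (cells mu) {1..a - 1}"
    unfolding cells_mu using syt_bij_betw[OF T] by (rule bij_betw_subset[rotated 2]) auto
  then show sum_mu: "sum_list mu = a - 1"
    using bij_betw_same_card card_cells by fastforce
  have "bij_betw ?U (cells mu) {1..sum_list mu}"
    using bij_T unfolding sum_mu by (rule bij_betw_cong[THEN iffD1, rotated]) (simp add: cells_mu)
  moreover have "?U p = 0" if "p \<notin> cells mu" for p
    using that syt_outside[OF T, of p] cells_mu by auto
  moreover have "?U (i, j) < ?U (i, Suc j)" if "(i, Suc j) \<in> cells mu" for i j
    using that syt_row_less[OF T] cells_mu by fastforce
  moreover have "?U (i, j) < ?U (Suc i, j)" if "(Suc i, j) \<in> cells mu" for i j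
    using that syt_column_less[OF T] cells_mu by fastforce
  ultimately show "?U \<in> syt mu"
    unfolding syt_def by blast
qed

lemma is_partition_restrict_below:
  assumes T: "T \<in> syt lam" and lam: "is_partition lam"
    and cells_mu: "cells mu = {p \<in> cells lam. T p < a}"
  shows "is_partition mu"
proof (rule is_partition_if_cells_column_closed)
  fix i j assume "(Suc i, j) \<in> cells mu"
  then have cell: "(Suc i, j) \<in> cells lam" and "T (Suc i, j) < a"
    using cells_mu by auto
  moreover have "lam ! Suc i \<le> lam ! i"
    using lam cell unfolding is_partition_def by (auto intro: sorted_wrt_nth_less)
  ultimately show "(i, j) \<in> cells mu"
    using syt_column_less[OF T cell] cells_mu by auto
qed

lemma descents_extend_syt:
  assumes T: "T \<in> syt lam" and U: "U \<in> syt mu"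
    and sub: "cells mu \<subseteq> cells lam" and eq: "\<forall>p\<in>cells mu. T p = U p"
    and a: "a = sum_list mu + 1" "a \<le> sum_list lam"
    and row_a: "row_of lam T a = 0"
    and rows_inc: "\<And>m. a \<le> m \<Longrightarrow> m < sum_list lam \<Longrightarrow> row_of lam T m < row_of lam T (Suc m)"
  shows "descents lam T = descents mu U \<union> {a..<sum_list lam}"
proof (rule set_eqI)
  fix m
  consider "1 \<le> m" "Suc m < a" | "m = 0" | "Suc m = a" | "a \<le> m" by linarith
  then show "m \<in> descents lam T \<longleftrightarrow> m \<in> descents mu U \<union> {a..<sum_list lam}"
  proof cases
    case 1
    then have "row_of lam T m = row_of mu U m" "row_of lam T (Suc m) = row_of mu U (Suc m)"
      using row_of_restrict_syt[OF T U sub eq] a by auto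
    with 1 a show ?thesis by (simp add: descents_def)
  next
    case 2
    then show ?thesis using a by (simp add: descents_def)
  next
    case 3
    then show ?thesis using row_a a by (simp add: descents_def)
  next
    case 4
    have "m \<notin> descents mu U"
      using 4 a descents_subset[of mu U] by auto
    moreover have "m \<in> descents lam T \<longleftrightarrow> m < sum_list lam"
      using 4 a rows_inc[of m] by (auto simp: descents_def)
    ultimately show ?thesis using 4 by auto
  qed
qed

lemma des_maj_extend_syt:
  assumes "T \<in> syt lam" "U \<in> syt mu" "cells mu \<subseteq> cells lam" "\<forall>p\<in>cells mu. T p = U p"
    and "a = sum_list mu + 1" "a \<le> sum_list lam" "row_of lam T a = 0"
    and "\<And>m. a \<le> m \<Longrightarrow> m < sum_list lam \<Longrightarrow> row_of lam T m < row_of lam T (Suc m)"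
  shows "des lam T = des mu U + (sum_list lam - a)"
    and "maj lam T = maj mu U + \<Sum>{a..<sum_list lam}"
proof -
  have split: "descents lam T = descents mu U \<union> {a..<sum_list lam}"
    by (rule descents_extend_syt[OF assms])
  have disjoint: "descents mu U \<inter> {a..<sum_list lam} = {}"
    using descents_subset[of mu U] assms(5) by auto
  show "des lam T = des mu U + (sum_list lam - a)"
    unfolding des_def split using disjoint by (simp add: card_Un_disjoint)
  show "maj lam T = maj mu U + \<Sum>{a..<sum_list lam}"
    unfolding maj_def split using disjoint by (simp add: sum.union_disjoint)
qed

lemma sum_last_nats: "k \<le> n \<Longrightarrow> \<Sum>{n - k..<n} = k * n - (k + 1 choose 2)"
proof (induction k)
  case (Suc k)
  have "{n - Suc k..<n} = insert (n - Suc k) {n - k..<n}"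
    using Suc.prems by auto
  then have "\<Sum>{n - Suc k..<n} = (n - Suc k) + (k * n - (k + 1 choose 2))"
    using Suc by simp
  moreover have "(k + 1 choose 2) \<le> k * n"
  proof -
    have "(k + 1 choose 2) \<le> (k + 1) * k"
      by (simp add: choose_two)
    also have "\<dots> \<le> k * n"
      using Suc.prems by (metis Suc_eq_plus1 mult.commute mult_le_mono2)
    finally show ?thesis .
  qed
  moreover have "(Suc k + 1 choose 2) = (k + 1 choose 2) + (k + 1)"
    by (simp add: choose_two)
  ultimately show ?case
    using Suc.prems by (simp add: algebra_simps)
qed simp

definition corner_cells :: "nat list \<Rightarrow> nat set \<Rightarrow> (nat \<times> nat) set" where
  "corner_cells lam X = (\<lambda>i. (i, lam ! i - 1)) ` X"

lemma length_lower [simp]: "length (lower lam X) = length lam"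
  by (simp add: lower_def)

lemma nth_lower [simp]: "i < length lam \<Longrightarrow> lower lam X ! i = lam ! i - (if i \<in> X then 1 else 0)"
  by (simp add: lower_def)

lemma cells_lower: "cells (lower lam X) = cells lam - corner_cells lam X"
proof (rule set_eqI)
  fix p :: "nat \<times> nat"
  obtain i j where p: "p = (i, j)" by force
  show "p \<in> cells (lower lam X) \<longleftrightarrow> p \<in> cells lam - corner_cells lam X"
    unfolding p by (cases "i \<in> X") (auto simp: corner_cells_def)
qed

definition max_des_syt :: "nat list \<Rightarrow> (nat \<times> nat \<Rightarrow> nat) set" where
  "max_des_syt lam = {T \<in> syt lam. des lam T = sum_list lam - lam ! 0}"

lemma fpoly_max_des:
  "is_partition lam \<Longrightarrow> fpoly lam (sum_list lam - lam ! 0) = (\<Sum>T\<in>max_des_syt lam. monom 1 (maj lam T))"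
  by (simp add: fpoly_def max_des_syt_def)

locale positive_partition =
  fixes lam :: "nat list" and n r :: nat
  assumes is_partition: "is_partition lam" and sum_list_eq: "sum_list lam = n"
    and length_eq: "length lam = r" and parts_pos: "\<forall>x\<in>set lam. 0 < x" and length_pos: "0 < r"
begin

lemma nth_pos: "i < r \<Longrightarrow> 0 < lam ! i"
  using parts_pos length_eq nth_mem by blast

lemma nth_antimono: "i \<le> j \<Longrightarrow> j < r \<Longrightarrow> lam ! j \<le> lam ! i"
  using is_partition length_eq unfolding is_partition_def
  by (metis le_eq_less_or_eq order.refl sorted_wrt_nth_less)

lemma first_row_last_cell: "(0, lam ! 0 - 1) \<in> cells lam"
  using nth_pos[OF length_pos] length_pos length_eq by simp

lemma corner_cells_subset: "X \<subseteq> {..<r} \<Longrightarrow> corner_cells lam X \<subseteq> cells lam"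
  using nth_pos length_eq by (force simp: corner_cells_def)

lemma card_corner_cells: "card (corner_cells lam X) = card X"
  unfolding corner_cells_def by (rule card_image) (auto simp: inj_on_def)

lemma sum_list_lower: "X \<subseteq> {..<r} \<Longrightarrow> sum_list (lower lam X) = n - card X"
  using corner_cells_subset[of X]
  by (simp add: card_cells[symmetric] cells_lower card_Diff_subset finite_subset card_corner_cells)
    (simp add: card_cells sum_list_eq)

lemma card_le_sum_list_minus_first: "S \<subseteq> {1..<r} \<Longrightarrow> card S \<le> n - lam ! 0"
proof -
  assume S: "S \<subseteq> {1..<r}"
  obtain x xs where lam: "lam = x # xs"
    using length_eq length_pos by (cases lam) auto
  have "card S \<le> r - 1" using card_mono[OF _ S] by simp
  moreover have "length xs \<le> sum_list xs"
    using parts_pos lam by (intro length_le_sum_list) simp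
  ultimately show ?thesis using lam length_eq sum_list_eq by auto
qed

end

definition first_row_predecessors :: "nat list \<Rightarrow> (nat \<times> nat \<Rightarrow> nat) \<Rightarrow> nat set" where
  "first_row_predecessors lam T = (\<lambda>j. T (0, j) - 1) ` {1..<lam ! 0}"

definition first_row_last :: "nat list \<Rightarrow> (nat \<times> nat \<Rightarrow> nat) \<Rightarrow> nat" where
  "first_row_last lam T = T (0, lam ! 0 - 1)"

definition corner_rows :: "nat list \<Rightarrow> (nat \<times> nat \<Rightarrow> nat) \<Rightarrow> nat set" where
  "corner_rows lam T = row_of lam T ` {first_row_last lam T<..sum_list lam}"

definition truncate_syt :: "nat list \<Rightarrow> (nat \<times> nat \<Rightarrow> nat) \<Rightarrow> (nat \<times> nat \<Rightarrow> nat)" where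
  "truncate_syt lam T = (\<lambda>p. if T p < first_row_last lam T then T p else 0)"

text \<open>The corners of the rows in {0} \<union> S receive n - |S|, ..., n in order of increasing row.\<close>

definition attach_corners :: "nat list \<Rightarrow> nat set \<Rightarrow> (nat \<times> nat \<Rightarrow> nat) \<Rightarrow> (nat \<times> nat \<Rightarrow> nat)" where
  "attach_corners lam S U = (\<lambda>p.
     if p \<in> cells (lower lam (insert 0 S)) then U p
     else if p \<in> cells lam then sum_list lam - card S + card {t \<in> insert 0 S. t < fst p}
     else 0)"

context positive_partition
begin

context
  fixes T assumes T: "T \<in> syt lam"
begin

lemma first_row_predecessor_range:
  assumes j: "j \<in> {1..<lam ! 0}"
  shows "Suc (T (0, j) - 1) = T (0, j)" and "T (0, j) - 1 \<in> {1..<n}"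
proof -
  have cells: "(0, j - 1) \<in> cells lam" "(0, Suc (j - 1)) \<in> cells lam"
    using j length_eq length_pos by auto
  have "T (0, j - 1) < T (0, j)" "1 \<le> T (0, j - 1)" "T (0, j) \<le> n"
    using syt_row_less[OF T cells(2)] syt_entry_range[OF T cells(1)]
      syt_entry_range[OF T cells(2)] j sum_list_eq by auto
  then show "Suc (T (0, j) - 1) = T (0, j)" "T (0, j) - 1 \<in> {1..<n}" by auto
qed

lemma card_first_row_predecessors: "card (first_row_predecessors lam T) = lam ! 0 - 1"
proof -
  have "inj_on (\<lambda>j. T (0, j) - 1) {1..<lam ! 0}"
  proof (rule inj_onI)
    fix x y assume xy: "x \<in> {1..<lam ! 0}" "y \<in> {1..<lam ! 0}" "T (0, x) - 1 = T (0, y) - 1"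
    then have "T (0, x) = T (0, y)"
      using first_row_predecessor_range(1) by metis
    then show "x = y"
      using syt_entry_inj[OF T, of "(0, x)" "(0, y)"] xy length_eq length_pos by simp
  qed
  then show ?thesis by (simp add: first_row_predecessors_def card_image)
qed

lemma descents_first_row_predecessors_disjoint:
  "descents lam T \<inter> first_row_predecessors lam T = {}"
proof -
  have "m \<notin> descents lam T" if m: "m \<in> first_row_predecessors lam T" for m
  proof -
    obtain j where j: "j \<in> {1..<lam ! 0}" "m = T (0, j) - 1"
      using m by (auto simp: first_row_predecessors_def)
    then have "row_of lam T (Suc m) = 0"
      using first_row_predecessor_range(1)[OF j(1)] row_of_entry[OF T, of "(0, j)"] length_eq length_pos
      by simp
    then show ?thesis by (simp add: descents_def)
  qed
  then show ?thesis by blast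
qed

end

lemma descents_max_des:
  assumes T: "T \<in> max_des_syt lam"
  shows "descents lam T = {1..<n} - first_row_predecessors lam T"
proof -
  have T': "T \<in> syt lam" and des: "des lam T = n - lam ! 0"
    using T sum_list_eq by (auto simp: max_des_syt_def)
  have sub: "first_row_predecessors lam T \<subseteq> {1..<n}"
    using first_row_predecessor_range(2)[OF T'] by (auto simp: first_row_predecessors_def)
  have "card ({1..<n} - first_row_predecessors lam T) = des lam T"
    using sub card_first_row_predecessors[OF T'] nth_pos[OF length_pos] des
    by (simp add: card_Diff_subset finite_subset)
  moreover have "descents lam T \<subseteq> {1..<n} - first_row_predecessors lam T"
    using descents_subset[of lam T] descents_first_row_predecessors_disjoint[OF T'] sum_list_eq
    by auto
  ultimately show ?thesis
    unfolding des_def by (intro card_subset_eq) auto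
qed

end

locale max_des_tableau = positive_partition +
  fixes T assumes max_des: "T \<in> max_des_syt lam"
begin

abbreviation "a \<equiv> first_row_last lam T"
abbreviation "S \<equiv> corner_rows lam T"
abbreviation "mu \<equiv> lower lam (insert 0 (corner_rows lam T))"

lemma T_syt: "T \<in> syt lam"
  using max_des by (simp add: max_des_syt_def)

lemma first_row_last_range: "a \<in> {1..n}"
  using syt_entry_range[OF T_syt first_row_last_cell] sum_list_eq by (simp add: first_row_last_def)

lemma row_of_first_row_last: "row_of lam T a = 0"
  using row_of_entry[OF T_syt first_row_last_cell] by (simp add: first_row_last_def)

lemma rows_increase: "a \<le> m \<Longrightarrow> m < n \<Longrightarrow> row_of lam T m < row_of lam T (Suc m)"
proof -
  assume m: "a \<le> m" "m < n"
  have "m \<notin> first_row_predecessors lam T"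
  proof
    assume "m \<in> first_row_predecessors lam T"
    then obtain j where j: "j \<in> {1..<lam ! 0}" "m = T (0, j) - 1"
      by (auto simp: first_row_predecessors_def)
    then have "j \<le> lam ! 0 - 1" by auto
    then have "T (0, j) \<le> a"
      using syt_row_mono[OF T_syt first_row_last_cell] by (simp add: first_row_last_def)
    then show False
      using first_row_predecessor_range(1)[OF T_syt j(1)] j(2) m by simp
  qed
  moreover have "1 \<le> m" using first_row_last_range m by simp
  ultimately have "m \<in> descents lam T" using descents_max_des[OF max_des] m by simp
  then show ?thesis by (simp add: descents_def)
qed

lemma row_of_strict_mono: "strict_mono_on {a..n} (row_of lam T)"
  by (rule strict_mono_on_if_Suc_less) (rule rows_increase)

text \<open>A later entry in the same row would lie in a strictly lower row.\<close>

lemma entry_at_row_end: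
  assumes m: "m \<in> {a..n}"
  defines "i \<equiv> row_of lam T m"
  shows "(i, lam ! i - 1) \<in> cells lam" and "T (i, lam ! i - 1) = m"
proof -
  have "m \<in> {1..sum_list lam}"
    using m first_row_last_range sum_list_eq by auto
  then obtain p where p: "p \<in> cells lam" "T p = m"
    using syt_entry_surj[OF T_syt] by blast
  have "fst p = i"
    using row_of_entry[OF T_syt p(1)] p(2) by (simp add: i_def)
  then obtain j where ij: "p = (i, j)"
    by (cases p) simp
  have "j = lam ! i - 1"
  proof (rule ccontr)
    assume "j \<noteq> lam ! i - 1"
    then have next_cell: "(i, Suc j) \<in> cells lam" using p ij by auto
    then have "m < T (i, Suc j)" "T (i, Suc j) \<le> n"
      using syt_row_less[OF T_syt next_cell] syt_entry_range[OF T_syt next_cell] p ij sum_list_eq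
      by auto
    then have "row_of lam T m < row_of lam T (T (i, Suc j))"
      using strict_mono_onD[OF row_of_strict_mono] m by simp
    then show False using row_of_entry[OF T_syt next_cell] i_def by simp
  qed
  then show "(i, lam ! i - 1) \<in> cells lam" "T (i, lam ! i - 1) = m"
    using p ij by auto
qed

lemma insert_0_corner_rows: "insert 0 S = row_of lam T ` {a..n}"
proof -
  have "{a..n} = insert a {a<..n}" using first_row_last_range by auto
  then show ?thesis
    unfolding corner_rows_def sum_list_eq using row_of_first_row_last by simp
qed

lemma zero_notin_corner_rows: "0 \<notin> S"
proof
  assume "0 \<in> S"
  then obtain m where m: "m \<in> {a<..n}" "row_of lam T m = 0"
    unfolding corner_rows_def sum_list_eq by auto
  then have "row_of lam T a < row_of lam T m"
    using strict_mono_onD[OF row_of_strict_mono, of a m] first_row_last_range by auto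
  then show False using m row_of_first_row_last by simp
qed

lemma corner_rows_subset: "S \<subseteq> {1..<r}"
proof
  fix t assume t: "t \<in> S"
  then obtain m where "m \<in> {a..n}" "t = row_of lam T m"
    using insert_0_corner_rows by blast
  then have "t < r" using entry_at_row_end(1)[of m] length_eq by simp
  moreover have "t \<noteq> 0"
    using t zero_notin_corner_rows by (cases "t = 0") simp_all
  ultimately show "t \<in> {1..<r}" by simp
qed

lemma insert_0_corner_rows_subset: "insert 0 S \<subseteq> {..<r}"
  using corner_rows_subset length_pos by auto

lemma card_corner_rows: "card S = n - a"
  unfolding corner_rows_def sum_list_eq
  by (subst card_image) (auto intro: inj_on_subset[OF strict_mono_on_imp_inj_on[OF row_of_strict_mono]])

lemma first_row_last_le_iff:
  assumes p: "p \<in> cells lam"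
  shows "a \<le> T p \<longleftrightarrow> p \<in> corner_cells lam (insert 0 S)"
proof
  assume "a \<le> T p"
  then have m: "T p \<in> {a..n}" using syt_entry_range[OF T_syt p] sum_list_eq by simp
  let ?i = "row_of lam T (T p)"
  have "(?i, lam ! ?i - 1) = p"
    using syt_entry_inj[OF T_syt entry_at_row_end(1)[OF m] p] entry_at_row_end(2)[OF m] by simp
  moreover have "?i \<in> insert 0 S" using insert_0_corner_rows m by blast
  ultimately show "p \<in> corner_cells lam (insert 0 S)"
    unfolding corner_cells_def by (rule image_eqI[OF sym])
next
  assume "p \<in> corner_cells lam (insert 0 S)"
  then obtain m where m: "m \<in> {a..n}" "p = (row_of lam T m, lam ! row_of lam T m - 1)"
    unfolding insert_0_corner_rows corner_cells_def by auto
  then show "a \<le> T p" using entry_at_row_end(2)[OF m(1)] by simp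
qed

lemma cells_lower_corner_rows: "cells mu = {p \<in> cells lam. T p < a}"
proof (rule set_eqI)
  fix p
  show "p \<in> cells mu \<longleftrightarrow> p \<in> {p \<in> cells lam. T p < a}"
    unfolding cells_lower using first_row_last_le_iff[of p]
    by (cases "p \<in> cells lam") (simp_all add: not_le[symmetric])
qed

lemma sum_list_lower_corner_rows: "sum_list mu = a - 1"
proof -
  have "card (insert 0 S) = n - a + 1"
    using zero_notin_corner_rows card_corner_rows finite_subset[OF corner_rows_subset] by simp
  then show ?thesis
    using sum_list_lower[OF insert_0_corner_rows_subset] first_row_last_range by simp
qed

lemma truncate_syt_syt: "truncate_syt lam T \<in> syt mu"
  unfolding truncate_syt_def
  by (rule syt_restrict_below(1)[OF T_syt cells_lower_corner_rows])
    (use first_row_last_range sum_list_eq in simp)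

lemma is_partition_lower_corner_rows: "is_partition mu"
  by (rule is_partition_restrict_below[OF T_syt is_partition cells_lower_corner_rows])

lemma des_maj_truncate_syt:
  shows "des lam T = des mu (truncate_syt lam T) + card S"
    and "maj lam T = maj mu (truncate_syt lam T) + \<Sum>{n - card S..<n}"
proof -
  have sub: "cells mu \<subseteq> cells lam"
    using cells_lower_corner_rows by auto
  have eq: "\<forall>p\<in>cells mu. T p = truncate_syt lam T p"
    using cells_lower_corner_rows by (simp add: truncate_syt_def)
  have a: "a = sum_list mu + 1"
    using sum_list_lower_corner_rows first_row_last_range by simp
  note extend = des_maj_extend_syt[OF T_syt truncate_syt_syt sub eq a, unfolded sum_list_eq,
      OF _ row_of_first_row_last rows_increase]
  show "des lam T = des mu (truncate_syt lam T) + card S"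
    "maj lam T = maj mu (truncate_syt lam T) + \<Sum>{n - card S..<n}"
    using extend first_row_last_range card_corner_rows by auto
qed

lemma card_corner_rows_below:
  assumes m: "m \<in> {a..n}"
  shows "card {t \<in> insert 0 S. t < row_of lam T m} = m - a"
proof -
  have "{t \<in> insert 0 S. t < row_of lam T m} = row_of lam T ` {a..<m}"
    unfolding insert_0_corner_rows using strict_mono_on_less[OF row_of_strict_mono _ m] m by auto
  moreover have "inj_on (row_of lam T) {a..<m}"
    using m by (intro inj_on_subset[OF strict_mono_on_imp_inj_on[OF row_of_strict_mono]]) auto
  ultimately show ?thesis
    by (simp add: card_image)
qed

lemma corner_entry:
  assumes "p \<in> corner_cells lam (insert 0 S)"
  shows "T p = a + card {t \<in> insert 0 S. t < fst p}"
proof -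
  obtain m where m: "m \<in> {a..n}" and p: "p = (row_of lam T m, lam ! row_of lam T m - 1)"
    using assms unfolding insert_0_corner_rows corner_cells_def by auto
  then show ?thesis
    using entry_at_row_end(2)[OF m] card_corner_rows_below[OF m] by simp
qed

lemma attach_truncate: "attach_corners lam S (truncate_syt lam T) = T"
proof
  fix p
  have start: "n - card S = a" using card_corner_rows first_row_last_range by simp
  consider "p \<in> cells mu" | "p \<in> corner_cells lam (insert 0 S)" | "p \<notin> cells lam"
    unfolding cells_lower by blast
  then show "attach_corners lam S (truncate_syt lam T) p = T p"
  proof cases
    case 1
    then show ?thesis
      using cells_lower_corner_rows by (simp add: attach_corners_def truncate_syt_def)
  next
    case 2
    then have "p \<in> cells lam" "p \<notin> cells mu"
      using corner_cells_subset[OF insert_0_corner_rows_subset] by (auto simp: cells_lower)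
    then show ?thesis
      using corner_entry[OF 2] start by (simp add: attach_corners_def sum_list_eq)
  next
    case 3
    then show ?thesis
      using syt_outside[OF T_syt 3] by (simp add: attach_corners_def cells_lower)
  qed
qed

lemma truncate_max_des: "truncate_syt lam T \<in> max_des_syt mu"
proof -
  have "des mu (truncate_syt lam T) + (n - a) = n - lam ! 0"
    using des_maj_truncate_syt(1) max_des card_corner_rows sum_list_eq
    by (simp add: max_des_syt_def)
  then have "des mu (truncate_syt lam T) = (n - lam ! 0) - (n - a)"
    by simp
  also have "\<dots> = (a - 1) - (lam ! 0 - 1)"
    using first_row_last_range nth_pos[OF length_pos] by simp
  finally show ?thesis
    using truncate_syt_syt sum_list_lower_corner_rows length_pos length_eq
    by (simp add: max_des_syt_def)
qed

lemma maj_truncate: "maj lam T = maj mu (truncate_syt lam T) + (card S * n - (card S + 1 choose 2))"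
  using des_maj_truncate_syt(2) sum_last_nats[of "card S" n] card_corner_rows by simp

end

locale corner_extension = positive_partition +
  fixes S U
  assumes S: "S \<subseteq> {1..<r}" and mu_partition: "is_partition (lower lam (insert 0 S))"
    and U: "U \<in> syt (lower lam (insert 0 S))"
begin

abbreviation "X \<equiv> insert 0 S"
abbreviation "mu \<equiv> lower lam (insert 0 S)"
abbreviation "start \<equiv> n - card S"
abbreviation "rank i \<equiv> card {t \<in> insert 0 S. t < i}"
abbreviation "T \<equiv> attach_corners lam S U"

lemma finite_S: "finite S"
  using S finite_subset by blast

lemma X_subset: "X \<subseteq> {..<r}"
  using S length_pos by auto

lemma card_X: "card X = card S + 1"
  using S finite_S by (auto simp: card_insert_if)

lemma start_pos: "card S + 1 \<le> n"
  using card_le_sum_list_minus_first[OF S] nth_pos[OF length_pos] length_pos length_eq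
    sum_list_eq member_le_sum_list[of "lam ! 0" lam] by (simp add: le_diff_conv2)

lemma sum_list_mu: "sum_list mu = start - 1"
  using sum_list_lower[of X] S length_pos card_X by (auto simp: subset_iff)

lemma rank_strict_mono: "strict_mono_on X rank"
proof (rule strict_mono_onI)
  fix i i' assume i: "i \<in> X" "i' \<in> X" "i < i'"
  then have "{t \<in> X. t < i} \<subset> {t \<in> X. t < i'}" by auto
  then show "rank i < rank i'"
    using finite_S by (intro psubset_card_mono) auto
qed

lemma rank_image: "rank ` X = {0..card S}"
proof -
  have "rank i \<le> card S" if "i \<in> X" for i
  proof -
    have "rank i \<le> card (X - {i})"
      using finite_S by (intro card_mono) auto
    then show ?thesis using that finite_S card_X by simp
  qed
  moreover have "card (rank ` X) = card {0..card S}"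
    using card_image[OF strict_mono_on_imp_inj_on[OF rank_strict_mono]] card_X by simp
  ultimately show ?thesis
    by (intro card_subset_eq) auto
qed

lemma cells_split: "cells lam = cells mu \<union> corner_cells lam X" "cells mu \<inter> corner_cells lam X = {}"
  using corner_cells_subset[OF X_subset] unfolding cells_lower by auto

lemma attach_on_mu: "p \<in> cells mu \<Longrightarrow> T p = U p"
  by (simp add: attach_corners_def)

lemma attach_on_corner: "p \<in> corner_cells lam X \<Longrightarrow> T p = start + rank (fst p)"
  using cells_split by (auto simp: attach_corners_def sum_list_eq)

lemma U_range: "p \<in> cells mu \<Longrightarrow> U p \<in> {1..start - 1}"
  using syt_entry_range[OF U] sum_list_mu by simp

lemma attach_mu_less_corner:
  assumes p: "p \<in> cells mu" and q: "q \<in> corner_cells lam X"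
  shows "T p < T q"
proof -
  have "T p \<le> start - 1" using attach_on_mu[OF p] U_range[OF p] by simp
  moreover have "start \<le> T q" using attach_on_corner[OF q] by simp
  ultimately show ?thesis using start_pos by linarith
qed

lemma corner_cell: "i \<in> X \<Longrightarrow> (i, lam ! i - 1) \<in> corner_cells lam X"
  unfolding corner_cells_def by (rule imageI)

lemma start_plus_rank_image: "(\<lambda>i. start + rank i) ` X = {start..n}"
proof -
  have "(\<lambda>i. start + rank i) ` X = (+) start ` {0..card S}"
    unfolding rank_image[symmetric] image_image by (simp add: add.commute)
  also have "\<dots> = {start..n}"
    unfolding image_add_atLeastAtMost using start_pos by simp
  finally show ?thesis .
qed

lemma bij_betw_attach_corner: "bij_betw T (corner_cells lam X) {start..n}"
proof -
  have "T ` corner_cells lam X = (\<lambda>i. start + rank i) ` X"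
    unfolding corner_cells_def image_image using attach_on_corner corner_cell by simp
  then have "T ` corner_cells lam X = {start..n}"
    by (simp only: start_plus_rank_image)
  moreover have "inj_on T (corner_cells lam X)"
  proof (rule inj_onI)
    fix p q assume p: "p \<in> corner_cells lam X" and q: "q \<in> corner_cells lam X" and "T p = T q"
    then have "rank (fst p) = rank (fst q)"
      using attach_on_corner by simp
    moreover obtain i j where "i \<in> X" "p = (i, lam ! i - 1)" "j \<in> X" "q = (j, lam ! j - 1)"
      using p q unfolding corner_cells_def by blast
    ultimately show "p = q"
      using strict_mono_on_eq[OF rank_strict_mono] by simp
  qed
  ultimately show ?thesis by (simp add: bij_betw_def)
qed

lemma attach_syt: "T \<in> syt lam"
proof -
  have "bij_betw T (cells mu) {1..start - 1}"
    using syt_bij_betw[OF U] unfolding sum_list_mu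
    by (rule bij_betw_cong[THEN iffD1, rotated]) (simp add: attach_on_mu)
  then have "bij_betw T (cells lam) ({1..start - 1} \<union> {start..n})"
    unfolding cells_split(1) using bij_betw_attach_corner by (rule bij_betw_combine) auto
  moreover have "{1..start - 1} \<union> {start..n} = {1..sum_list lam}"
    using start_pos sum_list_eq by auto
  moreover have "T p = 0" if "p \<notin> cells lam" for p
    using that cells_split syt_outside[OF U, of p] by (auto simp: attach_corners_def)
  moreover have "T (i, j) < T (i, Suc j)" if cell: "(i, Suc j) \<in> cells lam" for i j
  proof (cases "(i, Suc j) \<in> cells mu")
    case True
    then show ?thesis using syt_row_less[OF U True] attach_on_mu by auto
  next
    case False
    then have corner: "(i, Suc j) \<in> corner_cells lam X" using cell cells_split by auto
    then have "(i, j) \<in> cells mu" using cell by (auto simp: corner_cells_def)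
    then show ?thesis using corner by (rule attach_mu_less_corner)
  qed
  moreover have "T (i, j) < T (Suc i, j)" if cell: "(Suc i, j) \<in> cells lam" for i j
  proof (cases "(Suc i, j) \<in> cells mu")
    case True
    moreover have "mu ! Suc i \<le> mu ! i"
      using mu_partition True unfolding is_partition_def
      by (auto simp del: nth_lower intro: sorted_wrt_nth_less)
    ultimately have "(i, j) \<in> cells mu"
      by (auto simp del: nth_lower)
    then show ?thesis using syt_column_less[OF U True] True attach_on_mu by auto
  next
    case False
    then have corner: "(Suc i, j) \<in> corner_cells lam X" using cell cells_split by auto
    have "(i, j) \<in> cells lam"
      using cell nth_antimono[of i "Suc i"] length_eq by auto
    then consider "(i, j) \<in> cells mu" | "(i, j) \<in> corner_cells lam X"
      using cells_split by auto
    then show ?thesis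
    proof cases
      case 2
      then have "i \<in> X" "Suc i \<in> X" using corner by (auto simp: corner_cells_def)
      then show ?thesis
        using 2 corner attach_on_corner strict_mono_onD[OF rank_strict_mono] by simp
    qed (use corner attach_mu_less_corner in blast)
  qed
  ultimately show ?thesis
    unfolding syt_def by simp
qed

lemma row_of_attach: "i \<in> X \<Longrightarrow> row_of lam T (start + rank i) = i"
  using row_of_entry[OF attach_syt, of "(i, lam ! i - 1)"] attach_on_corner corner_cell cells_split(1)
  by simp

lemma rows_increase_attach: "start \<le> m \<Longrightarrow> m < n \<Longrightarrow> row_of lam T m < row_of lam T (Suc m)"
proof -
  assume "start \<le> m" "m < n"
  then have "m \<in> (\<lambda>i. start + rank i) ` X" "Suc m \<in> (\<lambda>i. start + rank i) ` X"
    unfolding start_plus_rank_image by auto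
  then obtain i i' where i: "i \<in> X" "m = start + rank i"
    and i': "i' \<in> X" "Suc m = start + rank i'"
    by blast
  then have "i < i'"
    using strict_mono_on_less[OF rank_strict_mono i(1) i'(1)] by simp
  moreover have "row_of lam T m = i"
    unfolding i(2) by (rule row_of_attach[OF i(1)])
  moreover have "row_of lam T (Suc m) = i'"
    unfolding i'(2) by (rule row_of_attach[OF i'(1)])
  ultimately show ?thesis by simp
qed

lemma des_attach: "des lam T = des mu U + card S"
proof -
  have sub: "cells mu \<subseteq> cells lam" using cells_split by auto
  have eq: "\<forall>p\<in>cells mu. T p = U p" using attach_on_mu by simp
  have start: "start = sum_list mu + 1" using sum_list_mu start_pos by simp
  note extend = des_maj_extend_syt[OF attach_syt U sub eq start, unfolded sum_list_eq,
      OF _ _ rows_increase_attach]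
  have "row_of lam T start = 0" using row_of_attach[of 0] by simp
  then show ?thesis
    using extend(1) start_pos by simp
qed

lemma first_row_last_attach: "first_row_last lam T = start"
  using attach_on_corner[OF corner_cell[of 0]] by (simp add: first_row_last_def)

lemma corner_rows_attach: "corner_rows lam T = S"
proof -
  let ?f = "\<lambda>i. start + rank i"
  have inj: "inj_on ?f X"
    using strict_mono_on_imp_inj_on[OF rank_strict_mono] by (simp add: inj_on_def)
  have "?f ` (X - {0}) = ?f ` X - ?f ` {0}"
    by (rule inj_on_image_set_diff[OF inj]) auto
  moreover have "X - {0} = S" using S by auto
  ultimately have "?f ` S = ?f ` X - ?f ` {0}"
    by (simp only:)
  also have "\<dots> = {start..n} - {start}"
    by (simp only: start_plus_rank_image) simp
  also have "\<dots> = {start<..n}" by auto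
  finally have "corner_rows lam T = row_of lam T ` ?f ` S"
    by (simp add: corner_rows_def first_row_last_attach sum_list_eq)
  also have "\<dots> = S"
    unfolding image_image using row_of_attach by simp
  finally show ?thesis .
qed

lemma truncate_attach: "truncate_syt lam T = U"
proof
  fix p
  show "truncate_syt lam T p = U p"
  proof (cases "p \<in> cells mu")
    case True
    then have "T p = U p" "U p < start"
      using attach_on_mu[OF True] U_range[OF True] start_pos by auto
    then show ?thesis by (simp add: truncate_syt_def first_row_last_attach)
  next
    case False
    have "T p = 0 \<or> start \<le> T p"
    proof (cases "p \<in> corner_cells lam X")
      case True
      then show ?thesis using attach_on_corner by simp
    next
      case False
      then show ?thesis using \<open>p \<notin> cells mu\<close> cells_split by (simp add: attach_corners_def)
    qed
    then show ?thesis
      using syt_outside[OF U False] by (auto simp: truncate_syt_def first_row_last_attach)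
  qed
qed

lemma attach_max_des: "U \<in> max_des_syt mu \<Longrightarrow> T \<in> max_des_syt lam"
  using attach_syt des_attach card_le_sum_list_minus_first[OF S] sum_list_mu
    nth_pos[OF length_pos] length_pos length_eq
  by (auto simp: max_des_syt_def sum_list_eq)

end

context positive_partition
begin

lemma max_des_tableauI: "T \<in> max_des_syt lam \<Longrightarrow> max_des_tableau lam n r T"
  using positive_partition_axioms by (simp add: max_des_tableau_def max_des_tableau_axioms_def)

lemma corner_extensionI:
  "S \<subseteq> {1..<r} \<Longrightarrow> is_partition (lower lam (insert 0 S)) \<Longrightarrow> U \<in> syt (lower lam (insert 0 S))
    \<Longrightarrow> corner_extension lam n r S U"
  using positive_partition_axioms by (simp add: corner_extension_def corner_extension_axioms_def)

lemma sum_list_minus_first_lower: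
  assumes "S \<subseteq> {1..<r}"
  shows "sum_list (lower lam (insert 0 S)) - lower lam (insert 0 S) ! 0 = n - lam ! 0 - card S"
proof -
  have "insert 0 S \<subseteq> {..<r}" and "finite S"
    using assms length_pos finite_subset by auto
  then have "sum_list (lower lam (insert 0 S)) = n - (card S + 1)"
    using sum_list_lower assms by (auto simp: card_insert_if)
  then show ?thesis
    using card_le_sum_list_minus_first[OF assms] nth_pos[OF length_pos] length_pos length_eq by simp
qed

lemma bij_betw_corner_decomposition:
  "bij_betw (\<lambda>T. (corner_rows lam T, truncate_syt lam T)) (max_des_syt lam)
     (SIGMA S:{S. S \<subseteq> {1..<r} \<and> is_partition (lower lam (insert 0 S))}.
        max_des_syt (lower lam (insert 0 S)))"
  (is "bij_betw ?split ?A ?B")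
proof (rule bij_betwI[where g = "case_prod (attach_corners lam)"])
  have extension: "corner_extension lam n r S U" if "(S, U) \<in> ?B" for S U
    using that by (intro corner_extensionI) (auto simp: max_des_syt_def)
  show "?split \<in> ?A \<rightarrow> ?B"
    using max_des_tableau.corner_rows_subset[OF max_des_tableauI]
      max_des_tableau.is_partition_lower_corner_rows[OF max_des_tableauI]
      max_des_tableau.truncate_max_des[OF max_des_tableauI]
    by auto
  show "case_prod (attach_corners lam) \<in> ?B \<rightarrow> ?A"
    using corner_extension.attach_max_des[OF extension] by auto
  show "case_prod (attach_corners lam) (?split T) = T" if "T \<in> ?A" for T
    using max_des_tableau.attach_truncate[OF max_des_tableauI[OF that]] by simp
  show "?split (case_prod (attach_corners lam) y) = y" if "y \<in> ?B" for y
    using that corner_extension.corner_rows_attach[OF extension]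
      corner_extension.truncate_attach[OF extension]
    by auto
qed

theorem fpoly_max_des_eq_sum:
  "fpoly lam (n - lam ! 0) =
    (\<Sum>S | S \<subseteq> {1..<r}.
       monom 1 (card S * n - (card S + 1 choose 2))
       * fpoly (lower lam (insert 0 S)) (n - lam ! 0 - card S))"
proof -
  let ?P = "{S. S \<subseteq> {1..<r} \<and> is_partition (lower lam (insert 0 S))}"
  let ?mu = "\<lambda>S. lower lam (insert 0 S)"
  let ?shift = "\<lambda>S. card S * n - (card S + 1 choose 2)"
  have "fpoly lam (n - lam ! 0) = (\<Sum>T\<in>max_des_syt lam. monom 1 (maj lam T))"
    using fpoly_max_des[OF is_partition] sum_list_eq by simp
  also have "\<dots> = (\<Sum>(S, U)\<in>(SIGMA S:?P. max_des_syt (?mu S)). monom 1 (?shift S + maj (?mu S) U))"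
    using max_des_tableau.maj_truncate[OF max_des_tableauI]
    by (subst sum.reindex_bij_betw[OF bij_betw_corner_decomposition, symmetric])
      (simp add: add.commute)
  also have "\<dots> = (\<Sum>S\<in>?P. \<Sum>U\<in>max_des_syt (?mu S). monom 1 (?shift S + maj (?mu S) U))"
    by (rule sum.Sigma[symmetric]) (auto simp: finite_syt max_des_syt_def)
  also have "\<dots> = (\<Sum>S\<in>?P. monom 1 (?shift S) * fpoly (?mu S) (n - lam ! 0 - card S))"
  proof (rule sum.cong)
    fix S assume S: "S \<in> ?P"
    then have "fpoly (?mu S) (n - lam ! 0 - card S) = (\<Sum>U\<in>max_des_syt (?mu S). monom 1 (maj (?mu S) U))"
      using fpoly_max_des[of "?mu S"] sum_list_minus_first_lower[of S] by simp
    then show "(\<Sum>U\<in>max_des_syt (?mu S). monom 1 (?shift S + maj (?mu S) U))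
        = monom 1 (?shift S) * fpoly (?mu S) (n - lam ! 0 - card S)"
      by (simp add: sum_distrib_left mult_monom)
  qed simp
  also have "\<dots> = (\<Sum>S | S \<subseteq> {1..<r}. monom 1 (?shift S) * fpoly (?mu S) (n - lam ! 0 - card S))"
    by (rule sum.mono_neutral_left) (auto simp: fpoly_def)
  finally show ?thesis .
qed

end

theorem mainTheorem10:
  fixes lam :: "nat list" and n r :: nat
  assumes "is_partition lam" and "sum_list lam = n" and "length lam = r"
    and "\<forall>x\<in>set lam. x > 0"
  shows "fpoly lam (n - lam ! 0) =
    (\<Sum>S | S \<subseteq> {1..<r}.
       monom 1 (card S * n - (card S + 1 choose 2))
       * fpoly (lower lam (insert 0 S)) (n - lam ! 0 - card S))"
proof (cases "r = 0")
  case True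
  then have "lam = []" "n = 0" using assms by auto
  then show ?thesis using True by (simp add: lower_def)
next
  case False
  then interpret positive_partition lam n r
    using assms by unfold_locales auto
  show ?thesis by (rule fpoly_max_des_eq_sum)
qed
end
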